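(* For $n\ge2$ and all $P,Q\in\Gamma_n$, $D_{T\Delta}(P\|Q)\le 3D_{TJ}(P\|Q)$.
   Context: $\Gamma_n=\{P=(p_1,\dots,p_n): p_i>0,\ \sum p_i=1\}$. $\Delta(P\|Q)=\sum_{i=1}^n\frac{(p_i-q_i)^2}{p_i+q_i}$; $J(P\|Q)=\sum_{i=1}^n(p_i-q_i)\ln\frac{p_i}{q_i}$; $T(P\|Q)=\sum_{i=1}^n\frac{p_i+q_i}{2}\ln\frac{p_i+q_i}{2\sqrt{p_iq_i}}$. $D_{T\Delta}=T-\frac14\Delta$, $D_{TJ}=T-\frac18J$. *)

theory Defs
  imports Complex_Main
begin

definition Gamma :: "nat \<Rightarrow> (nat \<Rightarrow> real) set" where
  "Gamma n = {p. (\<forall>i\<in>{1..n}. p i > 0) \<and> (\<Sum>i=1..n. p i) = 1}"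

definition Delta_div :: "nat \<Rightarrow> (nat \<Rightarrow> real) \<Rightarrow> (nat \<Rightarrow> real) \<Rightarrow> real" where
  "Delta_div n p q = (\<Sum>i=1..n. (p i - q i)^2 / (p i + q i))"

definition J_div :: "nat \<Rightarrow> (nat \<Rightarrow> real) \<Rightarrow> (nat \<Rightarrow> real) \<Rightarrow> real" where
  "J_div n p q = (\<Sum>i=1..n. (p i - q i) * ln (p i / q i))"

definition T_div :: "nat \<Rightarrow> (nat \<Rightarrow> real) \<Rightarrow> (nat \<Rightarrow> real) \<Rightarrow> real" where
  "T_div n p q = (\<Sum>i=1..n. (p i + q i) / 2 * ln ((p i + q i) / (2 * sqrt (p i * q i))))"

definition D_TDelta :: "nat \<Rightarrow> (nat \<Rightarrow> real) \<Rightarrow> (nat \<Rightarrow> real) \<Rightarrow> real" where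
  "D_TDelta n p q = T_div n p q - Delta_div n p q / 4"

definition D_TJ :: "nat \<Rightarrow> (nat \<Rightarrow> real) \<Rightarrow> (nat \<Rightarrow> real) \<Rightarrow> real" where
  "D_TJ n p q = T_div n p q - J_div n p q / 8"

end

theory Submission
  imports Defs
begin

text \<open>
  Each divergence is a sum of coordinatewise terms, and the inequality already holds
  term by term.
  For coordinates \<open>a, b > 0\<close> the termwise gap \<open>3 D\<^sub>T\<^sub>J - D\<^sub>T\<^sub>\<Delta>\<close> equals
  \<open>(a + b)/8 \<cdot> \<psi>(a/b)\<close> with \<open>\<psi> = divergence_gap\<close>. One has \<open>\<psi>(1) = 0\<close> and
  \<open>(t + 1)\<^sup>2 \<psi>'(t) = \<phi>(t)\<close> with \<open>\<phi> = divergence_gap_slope\<close>, where \<open>\<phi>(1) = 0\<close> and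
  \<open>\<phi>'(t) = (t - 1)\<^sup>4 / (t\<^sup>2 (t + 1)\<^sup>2) \<ge> 0\<close>. So \<open>\<phi>\<close>, and with it \<open>\<psi>'\<close>, has the
  sign of \<open>t - 1\<close>, and \<open>\<psi>\<close> attains its minimum \<open>0\<close> at \<open>t = 1\<close>.
\<close>

lemma MVT_between_root:
  fixes f f' :: "real \<Rightarrow> real"
  assumes "c > 0" and "t > 0" and "t \<noteq> c"
    and deriv: "\<And>x. x > 0 \<Longrightarrow> DERIV f x :> f' x"
  obtains z where "z > 0" and "(z - c) * (t - c) > 0" and "f t - f c = (t - c) * f' z"
proof (cases "c < t")
  case True
  then obtain z where "c < z" "z < t" "f t - f c = (t - c) * f' z"
    using MVT2[of c t f f'] deriv \<open>c > 0\<close> by force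
  with \<open>c > 0\<close> show ?thesis by (intro that[of z]) auto
next
  case False
  with \<open>t \<noteq> c\<close> have "t < c" by simp
  then obtain z where "t < z" "z < c" "f c - f t = (c - t) * f' z"
    using MVT2[of t c f f'] deriv \<open>t > 0\<close> by force
  moreover have "(z - c) * (t - c) > 0"
    using \<open>z < c\<close> \<open>t < c\<close> by (intro mult_neg_neg) auto
  ultimately show ?thesis using \<open>t > 0\<close> by (intro that[of z]) (auto simp: algebra_simps)
qed

lemma sign_of_nondecreasing_with_root:
  fixes f f' :: "real \<Rightarrow> real"
  assumes "c > 0" and "f c = 0" and "t > 0"
    and deriv: "\<And>x. x > 0 \<Longrightarrow> DERIV f x :> f' x"
    and nonneg: "\<And>x. x > 0 \<Longrightarrow> f' x \<ge> 0"
  shows "(t - c) * f t \<ge> 0"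
proof (cases "t = c")
  case False
  then obtain z where z: "z > 0" "(z - c) * (t - c) > 0" "f t = (t - c) * f' z"
    using MVT_between_root[OF \<open>c > 0\<close> \<open>t > 0\<close> _ deriv] \<open>f c = 0\<close> by auto
  then show ?thesis using nonneg by (simp flip: mult.assoc)
qed simp

lemma nonneg_if_deriv_changes_sign_at_root:
  fixes f f' :: "real \<Rightarrow> real"
  assumes "c > 0" and "f c = 0" and "t > 0"
    and deriv: "\<And>x. x > 0 \<Longrightarrow> DERIV f x :> f' x"
    and sign: "\<And>x. x > 0 \<Longrightarrow> (x - c) * f' x \<ge> 0"
  shows "f t \<ge> 0"
proof (cases "t = c")
  case False
  then obtain z where z: "z > 0" "(z - c) * (t - c) > 0" "f t = (t - c) * f' z"
    using MVT_between_root[OF \<open>c > 0\<close> \<open>t > 0\<close> _ deriv] \<open>f c = 0\<close> by auto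
  have "(z - c) * f' z \<ge> 0" using sign z(1) .
  with z show ?thesis by (auto simp: zero_less_mult_iff zero_le_mult_iff)
qed (simp add: \<open>f c = 0\<close>)

definition divergence_gap :: "real \<Rightarrow> real" where
  "divergence_gap t = 8 * ln (t + 1) - 8 * ln 2 - 4 * ln t - 3 * ln t * (t - 1) / (t + 1)
     + 2 * ((t - 1) / (t + 1))\<^sup>2"

definition divergence_gap_slope :: "real \<Rightarrow> real" where
  "divergence_gap_slope t = (t - 1) * (t + 1) / t + 8 * (t - 1) / (t + 1) - 6 * ln t"

lemma DERIV_divergence_gap_slope:
  assumes "t > 0"
  shows "DERIV divergence_gap_slope t :> (t - 1) ^ 4 / (t\<^sup>2 * (t + 1)\<^sup>2)"
proof -
  have "t + 1 \<noteq> 0" using assms by simp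
  with assms show ?thesis
    unfolding divergence_gap_slope_def
    by (auto intro!: derivative_eq_intros)
       (simp add: divide_simps, simp add: power2_eq_square power4_eq_xxxx algebra_simps)
qed

lemma DERIV_divergence_gap:
  assumes "t > 0"
  shows "DERIV divergence_gap t :> divergence_gap_slope t / (t + 1)\<^sup>2"
proof -
  have "t + 1 \<noteq> 0" using assms by simp
  with assms show ?thesis
    unfolding divergence_gap_def divergence_gap_slope_def
    by (auto intro!: derivative_eq_intros)
       (simp add: divide_simps, simp add: power2_eq_square algebra_simps)
qed

lemma divergence_gap_slope_sign:
  assumes "t > 0"
  shows "(t - 1) * divergence_gap_slope t \<ge> 0"
proof (rule sign_of_nondecreasing_with_root[OF _ _ assms DERIV_divergence_gap_slope])
  show "divergence_gap_slope 1 = 0" by (simp add: divergence_gap_slope_def)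
qed (simp_all add: zero_le_even_power)

lemma divergence_gap_nonneg:
  assumes "t > 0"
  shows "divergence_gap t \<ge> 0"
proof (rule nonneg_if_deriv_changes_sign_at_root[OF _ _ assms DERIV_divergence_gap])
  show "divergence_gap 1 = 0" by (simp add: divergence_gap_def)
  fix x :: real
  assume "x > 0"
  then show "(x - 1) * (divergence_gap_slope x / (x + 1)\<^sup>2) \<ge> 0"
    using divergence_gap_slope_sign[of x] by simp
qed simp_all

lemma divergence_gap_termwise:
  fixes a b :: real
  assumes "a > 0" and "b > 0"
  shows "(a + b) / 8 * divergence_gap (a / b)
    = 2 * ((a + b) / 2 * ln ((a + b) / (2 * sqrt (a * b))))
      - 3 / 8 * ((a - b) * ln (a / b)) + (a - b)\<^sup>2 / (a + b) / 4"
proof -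
  define t where "t = a / b"
  have "t > 0" and a: "a = b * t" using assms by (simp_all add: t_def)
  have sum: "a + b = b * (t + 1)" and diff: "a - b = b * (t - 1)"
    unfolding a by (simp_all add: algebra_simps)
  have "sqrt (a * b) = b * sqrt t"
    using a assms by (simp add: real_sqrt_mult power2_eq_square[symmetric])
  then have "ln ((a + b) / (2 * sqrt (a * b))) = ln ((t + 1) / (2 * sqrt t))"
    unfolding sum using \<open>b > 0\<close> by simp
  also have "\<dots> = ln (t + 1) - ln 2 - ln t / 2"
    using \<open>t > 0\<close> by (simp add: ln_div ln_mult ln_sqrt)
  finally have ln_ratio: "ln ((a + b) / (2 * sqrt (a * b))) = ln (t + 1) - ln 2 - ln t / 2" .
  have sq_ratio: "(a - b)\<^sup>2 / (a + b) = b * (t - 1)\<^sup>2 / (t + 1)"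
    unfolding sum diff using \<open>b > 0\<close> by (simp add: power2_eq_square)
  show ?thesis
    unfolding ln_ratio sq_ratio t_def[symmetric] unfolding sum diff divergence_gap_def
    using \<open>t > 0\<close> by (simp add: divide_simps) (simp add: power2_eq_square algebra_simps)
qed

theorem proposition5p6:
  fixes n :: nat and P Q :: "nat \<Rightarrow> real"
  assumes "n \<ge> 2" and "P \<in> Gamma n" and "Q \<in> Gamma n"
  shows "D_TDelta n P Q \<le> 3 * D_TJ n P Q"
proof -
  have pos: "P i > 0" "Q i > 0" if "i \<in> {1..n}" for i
    using assms(2,3) that unfolding Gamma_def by auto
  have "0 \<le> (\<Sum>i=1..n. (P i + Q i) / 8 * divergence_gap (P i / Q i))"
    by (intro sum_nonneg mult_nonneg_nonneg divergence_gap_nonneg)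
       (simp_all add: pos add_nonneg_nonneg less_imp_le)
  also have "\<dots> = (\<Sum>i=1..n. 2 * ((P i + Q i) / 2 * ln ((P i + Q i) / (2 * sqrt (P i * Q i))))
      - 3 / 8 * ((P i - Q i) * ln (P i / Q i)) + (P i - Q i)\<^sup>2 / (P i + Q i) / 4)"
    by (intro sum.cong refl divergence_gap_termwise) (simp_all add: pos)
  also have "\<dots> = 2 * T_div n P Q - 3 / 8 * J_div n P Q + Delta_div n P Q / 4"
    unfolding T_div_def J_div_def Delta_div_def
    by (simp add: sum.distrib sum_subtractf sum_distrib_left sum_divide_distrib)
  also have "\<dots> = 3 * D_TJ n P Q - D_TDelta n P Q"
    unfolding D_TJ_def D_TDelta_def by simp
  finally show ?thesis by simp
qed

end
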